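(* Let $n\in\mathbb N$ and let $(x_t)_{t\in\Omega}$ be a continuous frame for $\mathbb R^n$ with lower frame bound $A$. Then for every $x\in\mathbb R^n$, $(x_t)_{t\in\Omega}$ does $A^{-1/2}$-stable phase retrieval near $x$.
   Context: A continuous frame $(x_t)_{t\in\Omega}$ for a Hilbert space $H$ over a measure space $(\Omega,\mu)$ satisfies $A\|x\|^2\le\int_\Omega|\langle x,x_t\rangle|^2d\mu\le B\|x\|^2$ for all $x\in H$ with $B\ge A>0$ ($A$ a lower frame bound); its analysis operator is $\Theta(x)=(\langle x,x_t\rangle)_{t\in\Omega}\in L_2(\Omega)$, $|\Theta x|=(|\langle x,x_t\rangle|)_{t\in\Omega}$. For $x,y$ with $x\neq\lambda y$ for all scalars $|\lambda|=1$, set $\Psi(x,y)=\||\Theta x|-|\Theta y|\|_{L_2(\Omega)}/\min_{|\lambda|=1}\|x-\lambda y\|$. For $C>0$, the frame does $C$-stable phase retrieval near $x$ if $\liminf_{y\to x,\ y\notin\{\lambda x:|\lambda|=1\}} C\,\Psi(x,y)\ge1$. *)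

theory Defs
  imports "HOL-Analysis.Analysis"
begin

text \<open>Weak measurability of
t \<mapsto> <x, x_t> is part of the notion; the integral is the (possibly infinite)
nonnegative integral, bounded by the frame inequality.\<close>
definition continuous_frame :: "'a measure \<Rightarrow> ('a \<Rightarrow> real^'n) \<Rightarrow> real \<Rightarrow> real \<Rightarrow> bool" where
  "continuous_frame M xt A B \<longleftrightarrow> 0 < A \<and> A \<le> B \<and>
     (\<forall>x::real^'n. (\<lambda>t. x \<bullet> xt t) \<in> borel_measurable M \<and>
        ennreal (A * (norm x)\<^sup>2) \<le> (\<integral>\<^sup>+ t. ennreal ((x \<bullet> xt t)\<^sup>2) \<partial>M) \<and>
        (\<integral>\<^sup>+ t. ennreal ((x \<bullet> xt t)\<^sup>2) \<partial>M) \<le> ennreal (B * (norm x)\<^sup>2))"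

definition abs_analysis_dist :: "'a measure \<Rightarrow> ('a \<Rightarrow> real^'n) \<Rightarrow> real^'n \<Rightarrow> real^'n \<Rightarrow> real" where
  "abs_analysis_dist M xt x y =
     sqrt (enn2real (\<integral>\<^sup>+ t. ennreal ((\<bar>x \<bullet> xt t\<bar> - \<bar>y \<bullet> xt t\<bar>)\<^sup>2) \<partial>M))"

definition phase_dist :: "real^'n \<Rightarrow> real^'n \<Rightarrow> real" where
  "phase_dist x y = Inf {norm (x - l *\<^sub>R y) | l::real. \<bar>l\<bar> = 1}"

definition Psi :: "'a measure \<Rightarrow> ('a \<Rightarrow> real^'n) \<Rightarrow> real^'n \<Rightarrow> real^'n \<Rightarrow> real" where
  "Psi M xt x y = abs_analysis_dist M xt x y / phase_dist x y"

definition stable_phase_retrieval_near :: "'a measure \<Rightarrow> ('a \<Rightarrow> real^'n) \<Rightarrow> real \<Rightarrow> real^'n \<Rightarrow> bool" where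
  "stable_phase_retrieval_near M xt C x \<longleftrightarrow>
     Liminf (at x within {y. \<forall>l::real. \<bar>l\<bar> = 1 \<longrightarrow> y \<noteq> l *\<^sub>R x})
            (\<lambda>y. ereal (C * Psi M xt x y)) \<ge> 1"

end

theory Submission
  imports Defs
begin

text \<open>
  Write \<open>y = x + d\<close>. Pointwise, \<open>(\<bar>\<langle>x,x\<^sub>t\<rangle>\<bar> - \<bar>\<langle>y,x\<^sub>t\<rangle>\<bar>)\<^sup>2 = \<langle>d,x\<^sub>t\<rangle>\<^sup>2\<close> unless
  \<open>\<langle>x,x\<^sub>t\<rangle>\<close> and \<open>\<langle>y,x\<^sub>t\<rangle>\<close> have opposite signs, which forces
  \<open>0 < \<bar>\<langle>x,x\<^sub>t\<rangle>\<bar> < \<bar>\<langle>d,x\<^sub>t\<rangle>\<bar> \<le> \<parallel>d\<parallel> \<parallel>x\<^sub>t\<parallel>\<close>; there the defect is at most \<open>\<parallel>d\<parallel>\<^sup>2 \<parallel>x\<^sub>t\<parallel>\<^sup>2\<close>.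
  In finite dimension the upper frame bound makes \<open>\<parallel>x\<^sub>t\<parallel>\<^sup>2\<close> integrable, so by monotone
  convergence its integral over \<open>{0 < \<bar>\<langle>x,x\<^sub>t\<rangle>\<bar> < \<epsilon> \<parallel>x\<^sub>t\<parallel>}\<close> is below any \<open>\<eta> > 0\<close> for small
  \<open>\<epsilon>\<close>. Integrating and using the lower frame bound gives
  \<open>\<parallel>|\<Theta>x| - |\<Theta>y|\<parallel>\<^sup>2 \<ge> (A - \<eta>) \<parallel>d\<parallel>\<^sup>2\<close> for \<open>\<parallel>d\<parallel> < \<epsilon>\<close>, while the phase distance
  of \<open>x\<close> and \<open>y\<close> is at most \<open>\<parallel>d\<parallel>\<close>.
\<close>

lemma continuous_frameD:
  fixes xt :: "'a \<Rightarrow> real^'n"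
  assumes "continuous_frame M xt A B"
  shows "0 < A"
    and "(\<lambda>t. v \<bullet> xt t) \<in> borel_measurable M"
    and "ennreal (A * (norm v)\<^sup>2) \<le> (\<integral>\<^sup>+ t. ennreal ((v \<bullet> xt t)\<^sup>2) \<partial>M)"
    and "(\<integral>\<^sup>+ t. ennreal ((v \<bullet> xt t)\<^sup>2) \<partial>M) \<le> ennreal (B * (norm v)\<^sup>2)"
  using assms by (auto simp: continuous_frame_def)

lemma continuous_frame_measurable:
  fixes xt :: "'a \<Rightarrow> real^'n"
  assumes "continuous_frame M xt A B"
  shows "xt \<in> borel_measurable M"
  using continuous_frameD(2)[OF assms]
  by (subst borel_measurable_euclidean_space) (simp add: inner_commute)

lemma norm_sq_eq_sum_inner_Basis:
  fixes v :: "'a::euclidean_space"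
  shows "(norm v)\<^sup>2 = (\<Sum>b\<in>Basis. (b \<bullet> v)\<^sup>2)"
  by (subst power2_norm_eq_inner, subst euclidean_inner) (simp add: inner_commute power2_eq_square)

lemma continuous_frame_nn_integral_norm_sq_finite:
  fixes xt :: "'a \<Rightarrow> real^'n"
  assumes "continuous_frame M xt A B"
  shows "(\<integral>\<^sup>+ t. ennreal ((norm (xt t))\<^sup>2) \<partial>M) < \<infinity>"
proof -
  note continuous_frameD(2)[OF assms, measurable]
  have "(\<integral>\<^sup>+ t. ennreal ((norm (xt t))\<^sup>2) \<partial>M)
      = (\<integral>\<^sup>+ t. (\<Sum>b\<in>Basis. ennreal ((b \<bullet> xt t)\<^sup>2)) \<partial>M)"
    by (simp add: norm_sq_eq_sum_inner_Basis sum_nonneg)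
  also have "\<dots> = (\<Sum>b\<in>Basis. (\<integral>\<^sup>+ t. ennreal ((b \<bullet> xt t)\<^sup>2) \<partial>M))"
    by (rule nn_integral_sum) measurable
  also have "\<dots> \<le> (\<Sum>b\<in>(Basis :: (real^'n) set). ennreal (B * (norm b)\<^sup>2))"
    by (intro sum_mono continuous_frameD(4)[OF assms])
  also have "\<dots> < \<infinity>"
    by (simp add: less_top[symmetric] ennreal_mult_eq_top_iff)
  finally show ?thesis .
qed

lemma continuous_frame_nn_integral_abs_diff:
  fixes xt :: "'a \<Rightarrow> real^'n"
  assumes "continuous_frame M xt A B"
  shows "(\<integral>\<^sup>+ t. ennreal ((\<bar>x \<bullet> xt t\<bar> - \<bar>y \<bullet> xt t\<bar>)\<^sup>2) \<partial>M)
           = ennreal ((abs_analysis_dist M xt x y)\<^sup>2)"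
proof -
  have "(\<integral>\<^sup>+ t. ennreal ((\<bar>x \<bullet> xt t\<bar> - \<bar>y \<bullet> xt t\<bar>)\<^sup>2) \<partial>M)
      \<le> (\<integral>\<^sup>+ t. ennreal (((x - y) \<bullet> xt t)\<^sup>2) \<partial>M)"
  proof (intro nn_integral_mono ennreal_leI)
    fix t
    have "\<bar>\<bar>x \<bullet> xt t\<bar> - \<bar>y \<bullet> xt t\<bar>\<bar> \<le> \<bar>(x - y) \<bullet> xt t\<bar>"
      by (simp add: inner_diff_left abs_triangle_ineq3)
    then show "(\<bar>x \<bullet> xt t\<bar> - \<bar>y \<bullet> xt t\<bar>)\<^sup>2 \<le> ((x - y) \<bullet> xt t)\<^sup>2"
      by (metis abs_ge_zero power2_abs power_mono)
  qed
  also have "\<dots> \<le> ennreal (B * (norm (x - y))\<^sup>2)"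
    by (rule continuous_frameD(4)[OF assms])
  finally have "(\<integral>\<^sup>+ t. ennreal ((\<bar>x \<bullet> xt t\<bar> - \<bar>y \<bullet> xt t\<bar>)\<^sup>2) \<partial>M) \<noteq> \<infinity>"
    by (auto simp: top_unique)
  then show ?thesis
    by (simp add: abs_analysis_dist_def less_top)
qed

lemma phase_dist_eq_min: "phase_dist x y = min (norm (x - y)) (norm (x + y))"
proof -
  have "{l::real. \<bar>l\<bar> = 1} = {1, -1}"
    by auto
  then have "{norm (x - l *\<^sub>R y) | l::real. \<bar>l\<bar> = 1} = {norm (x - y), norm (x + y)}"
    by (simp add: setcompr_eq_image)
  then show ?thesis
    unfolding phase_dist_def by (simp add: cInf_insert inf_min)
qed

lemma Psi_ge:
  assumes "0 \<le> c" and "c * norm (y - x) \<le> abs_analysis_dist M xt x y"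
    and "y \<noteq> x" and "y \<noteq> - x"
  shows "c \<le> Psi M xt x y"
proof -
  have "0 < phase_dist x y" and "phase_dist x y \<le> norm (y - x)"
    using assms(3,4)
    by (auto simp: phase_dist_eq_min norm_minus_commute add.commute eq_neg_iff_add_eq_0)
  with assms(1,2) show ?thesis
    unfolding Psi_def by (simp add: le_divide_eq) (meson mult_left_mono order_trans)
qed

lemma sq_le_abs_diff_sq_add:
  fixes a b c e :: real
  assumes "\<bar>b\<bar> \<le> c" and "c \<le> e"
  shows "b\<^sup>2 \<le> (\<bar>a\<bar> - \<bar>a + b\<bar>)\<^sup>2 + (if 0 < \<bar>a\<bar> \<and> \<bar>a\<bar> < e then c\<^sup>2 else 0)"
proof (cases "0 \<le> a * (a + b)")
  case True
  then have "\<bar>a\<bar> - \<bar>a + b\<bar> = b \<or> \<bar>a\<bar> - \<bar>a + b\<bar> = - b"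
    by (cases "0 \<le> a"; cases "0 \<le> a + b") (auto simp: mult_le_0_iff zero_le_mult_iff)
  then show ?thesis by auto
next
  case False
  then have "0 < \<bar>a\<bar> \<and> \<bar>a\<bar> < e"
    using assms by (cases "0 \<le> a"; cases "0 \<le> a + b") (auto simp: mult_le_0_iff zero_le_mult_iff)
  moreover have "b\<^sup>2 \<le> c\<^sup>2"
    using assms(1) by (metis abs_ge_zero order_trans power2_abs power_mono)
  ultimately show ?thesis by (simp add: add_increasing)
qed

lemma nn_integral_small_ratio_vanishes:
  fixes a w N :: "'a \<Rightarrow> real" and \<eta> :: ennreal
  assumes [measurable]: "a \<in> borel_measurable M" "w \<in> borel_measurable M" "N \<in> borel_measurable M"
    and finite: "(\<integral>\<^sup>+ t. ennreal (N t) \<partial>M) < \<infinity>" and "0 < \<eta>"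
  shows "\<exists>\<epsilon>>0. (\<integral>\<^sup>+ t. ennreal (if 0 < \<bar>a t\<bar> \<and> \<bar>a t\<bar> < \<epsilon> * w t then N t else 0) \<partial>M) < \<eta>"
proof -
  define f where
    "f k t = ennreal (if 0 < \<bar>a t\<bar> \<and> \<bar>a t\<bar> < (1 / Suc k) * w t then N t else 0)" for k t
  have f_measurable[measurable]: "f k \<in> borel_measurable M" for k
    unfolding f_def by measurable
  have "decseq f"
  proof (intro decseq_SucI le_funI)
    fix k t
    have "\<bar>a t\<bar> < (1 / Suc k) * w t" if "\<bar>a t\<bar> < (1 / Suc (Suc k)) * w t"
    proof -
      have "0 < (1 / Suc (Suc k)) * w t"
        using that abs_ge_zero by linarith
      then have "0 < w t"
        by (auto simp: zero_less_divide_iff)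
      then have "(1 / Suc (Suc k)) * w t \<le> (1 / Suc k) * w t"
        by (intro mult_right_mono) (auto simp: frac_le)
      with that show ?thesis
        by linarith
    qed
    then show "f (Suc k) t \<le> f k t"
      unfolding f_def by auto
  qed
  have "(INF k. f k t) = 0" for t
  proof -
    obtain k :: nat where "a t = 0 \<or> w t < k * \<bar>a t\<bar>"
      using reals_Archimedean3[of "\<bar>a t\<bar>"] by fastforce
    then have "a t = 0 \<or> (1 / Suc k) * w t \<le> \<bar>a t\<bar>"
      by (auto simp: field_simps)
    then have "f k t = 0"
      by (auto simp: f_def)
    then show ?thesis
      by (metis INF_lower UNIV_I bot.extremum_uniqueI bot_ennreal)
  qed
  moreover have "(\<integral>\<^sup>+ t. f 0 t \<partial>M) < \<infinity>"
    using finite by (rule le_less_trans[rotated]) (auto simp: f_def intro!: nn_integral_mono)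
  ultimately have "(INF k. (\<integral>\<^sup>+ t. f k t \<partial>M)) < \<eta>"
    using nn_integral_monotone_convergence_INF_decseq[OF \<open>decseq f\<close> f_measurable] \<open>0 < \<eta>\<close>
    by simp
  then obtain k where "(\<integral>\<^sup>+ t. f k t \<partial>M) < \<eta>"
    by (auto simp: INF_less_iff)
  then show ?thesis
    by (intro exI[of _ "1 / Suc k"]) (simp add: f_def)
qed

lemma continuous_frame_abs_analysis_dist_lower:
  fixes xt :: "'a \<Rightarrow> real^'n" and x :: "real^'n"
  assumes frame: "continuous_frame M xt A B" and "0 < \<eta>"
  shows "\<exists>\<delta>>0. \<forall>y. norm (y - x) < \<delta> \<longrightarrow>
           (A - \<eta>) * (norm (y - x))\<^sup>2 \<le> (abs_analysis_dist M xt x y)\<^sup>2"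
proof -
  note continuous_frameD(2)[OF frame, measurable] continuous_frame_measurable[OF frame, measurable]
  define small where
    "small \<epsilon> t = (if 0 < \<bar>x \<bullet> xt t\<bar> \<and> \<bar>x \<bullet> xt t\<bar> < \<epsilon> * norm (xt t) then (norm (xt t))\<^sup>2 else 0)"
    for \<epsilon> t
  have small_measurable[measurable]: "small \<epsilon> \<in> borel_measurable M" for \<epsilon>
    unfolding small_def by measurable
  have small_nonneg: "0 \<le> small \<epsilon> t" for \<epsilon> t
    by (simp add: small_def)
  have "\<exists>\<epsilon>>0. (\<integral>\<^sup>+ t. ennreal (small \<epsilon> t) \<partial>M) < ennreal \<eta>"
    unfolding small_def using \<open>0 < \<eta>\<close>
    by (intro nn_integral_small_ratio_vanishes continuous_frame_nn_integral_norm_sq_finite[OF frame]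
              ennreal_less_zero_iff[THEN iffD2])
       measurable
  then obtain \<epsilon> where "0 < \<epsilon>" and small: "(\<integral>\<^sup>+ t. ennreal (small \<epsilon> t) \<partial>M) < ennreal \<eta>"
    by blast
  have "(A - \<eta>) * (norm (y - x))\<^sup>2 \<le> (abs_analysis_dist M xt x y)\<^sup>2"
    if "norm (y - x) < \<epsilon>" for y
  proof -
    define D where "D = norm (y - x)"
    have pointwise: "ennreal (((y - x) \<bullet> xt t)\<^sup>2)
        \<le> ennreal ((\<bar>x \<bullet> xt t\<bar> - \<bar>y \<bullet> xt t\<bar>)\<^sup>2) + ennreal (D\<^sup>2) * ennreal (small \<epsilon> t)" for t
    proof -
      have "\<bar>(y - x) \<bullet> xt t\<bar> \<le> D * norm (xt t)"
        unfolding D_def by (rule Cauchy_Schwarz_ineq2)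
      moreover have "D * norm (xt t) \<le> \<epsilon> * norm (xt t)"
        using that by (simp add: D_def mult_right_mono)
      ultimately have "((y - x) \<bullet> xt t)\<^sup>2 \<le> (\<bar>x \<bullet> xt t\<bar> - \<bar>x \<bullet> xt t + (y - x) \<bullet> xt t\<bar>)\<^sup>2
          + (if 0 < \<bar>x \<bullet> xt t\<bar> \<and> \<bar>x \<bullet> xt t\<bar> < \<epsilon> * norm (xt t) then (D * norm (xt t))\<^sup>2 else 0)"
        by (rule sq_le_abs_diff_sq_add)
      then have "((y - x) \<bullet> xt t)\<^sup>2 \<le> (\<bar>x \<bullet> xt t\<bar> - \<bar>y \<bullet> xt t\<bar>)\<^sup>2 + D\<^sup>2 * small \<epsilon> t"
        by (auto simp: small_def inner_diff_left power_mult_distrib split: if_splits)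
      from ennreal_leI[OF this] show ?thesis
        using small_nonneg[of \<epsilon> t] by (simp add: ennreal_mult')
    qed
    have "ennreal (A * D\<^sup>2) \<le> (\<integral>\<^sup>+ t. ennreal (((y - x) \<bullet> xt t)\<^sup>2) \<partial>M)"
      unfolding D_def by (rule continuous_frameD(3)[OF frame])
    also have "\<dots> \<le> (\<integral>\<^sup>+ t. ennreal ((\<bar>x \<bullet> xt t\<bar> - \<bar>y \<bullet> xt t\<bar>)\<^sup>2)
                          + ennreal (D\<^sup>2) * ennreal (small \<epsilon> t) \<partial>M)"
      by (intro nn_integral_mono pointwise)
    also have "\<dots> = ennreal ((abs_analysis_dist M xt x y)\<^sup>2)
                   + ennreal (D\<^sup>2) * (\<integral>\<^sup>+ t. ennreal (small \<epsilon> t) \<partial>M)"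
      by (subst nn_integral_add)
         (auto simp: nn_integral_cmult continuous_frame_nn_integral_abs_diff[OF frame])
    also have "\<dots> \<le> ennreal ((abs_analysis_dist M xt x y)\<^sup>2) + ennreal (D\<^sup>2) * ennreal \<eta>"
      using small by (intro add_left_mono mult_left_mono) auto
    also have "\<dots> = ennreal ((abs_analysis_dist M xt x y)\<^sup>2 + D\<^sup>2 * \<eta>)"
      using \<open>0 < \<eta>\<close> by (simp add: ennreal_mult')
    finally have "A * D\<^sup>2 \<le> (abs_analysis_dist M xt x y)\<^sup>2 + D\<^sup>2 * \<eta>"
      by (subst (asm) ennreal_le_iff) (use \<open>0 < \<eta>\<close> in auto)
    then show ?thesis
      by (simp add: D_def algebra_simps)
  qed
  with \<open>0 < \<epsilon>\<close> show ?thesis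
    by blast
qed

lemma Liminf_ereal_ge_oneI:
  assumes "\<And>r. 0 \<le> r \<Longrightarrow> r < 1 \<Longrightarrow> eventually (\<lambda>y. r \<le> f y) F"
  shows "1 \<le> Liminf F (\<lambda>y. ereal (f y))"
  unfolding le_Liminf_iff
proof (intro allI impI)
  fix c :: ereal
  assume "c < 1"
  then obtain z :: real where "c < ereal z" and "z < 1"
    using ereal_dense2 by fastforce
  then have "c < ereal (max z 0)" and "max z 0 < 1"
    by (auto simp: less_max_iff_disj)
  then show "eventually (\<lambda>y. c < ereal (f y)) F"
    using assms[of "max z 0"] by (auto elim!: eventually_mono intro: less_le_trans)
qed

lemma continuous_frame_Psi_eventually_ge:
  fixes xt :: "'a \<Rightarrow> real^'n" and x :: "real^'n"
  assumes frame: "continuous_frame M xt A B" and "0 \<le> c" and "c < sqrt A"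
  shows "\<forall>\<^sub>F y in at x within {y. \<forall>l::real. \<bar>l\<bar> = 1 \<longrightarrow> y \<noteq> l *\<^sub>R x}. c \<le> Psi M xt x y"
proof -
  have "c\<^sup>2 < (sqrt A)\<^sup>2"
    using assms(3,2) by (rule power_strict_mono) simp
  then have "0 < A - c\<^sup>2"
    using continuous_frameD(1)[OF frame] by simp
  from continuous_frame_abs_analysis_dist_lower[OF frame this]
  obtain \<delta> where "0 < \<delta>" and close: "\<forall>y. norm (y - x) < \<delta> \<longrightarrow>
      (A - (A - c\<^sup>2)) * (norm (y - x))\<^sup>2 \<le> (abs_analysis_dist M xt x y)\<^sup>2"
    by blast
  have "c \<le> Psi M xt x y"
    if "\<forall>l::real. \<bar>l\<bar> = 1 \<longrightarrow> y \<noteq> l *\<^sub>R x" and "y \<noteq> x" and "dist y x < \<delta>" for y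
  proof (rule Psi_ge)
    have "(c * norm (y - x))\<^sup>2 \<le> (abs_analysis_dist M xt x y)\<^sup>2"
      using close that(3) by (simp add: dist_norm power_mult_distrib)
    then show "c * norm (y - x) \<le> abs_analysis_dist M xt x y"
      by (rule power2_le_imp_le) (simp add: abs_analysis_dist_def)
    show "y \<noteq> - x"
      using that(1) by (metis abs_minus_cancel abs_one scaleR_minus1_left)
  qed (use that(2) \<open>0 \<le> c\<close> in auto)
  then show ?thesis
    unfolding eventually_at using \<open>0 < \<delta>\<close> by blast
qed

theorem theorem3p2:
  fixes M :: "'a measure" and xt :: "'a \<Rightarrow> real^'n" and A B :: real
  assumes "continuous_frame M xt A B"
  shows "\<forall>x::real^'n. stable_phase_retrieval_near M xt (1 / sqrt A) x"
proof
  fix x :: "real^'n"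
  have "0 < A"
    by (rule continuous_frameD(1)[OF assms])
  show "stable_phase_retrieval_near M xt (1 / sqrt A) x"
    unfolding stable_phase_retrieval_near_def
  proof (rule Liminf_ereal_ge_oneI)
    fix r :: real
    assume "0 \<le> r" "r < 1"
    with \<open>0 < A\<close> have "0 \<le> sqrt A * r" and "sqrt A * r < sqrt A"
      by simp_all
    then have "\<forall>\<^sub>F y in at x within {y. \<forall>l::real. \<bar>l\<bar> = 1 \<longrightarrow> y \<noteq> l *\<^sub>R x}.
        sqrt A * r \<le> Psi M xt x y"
      by (rule continuous_frame_Psi_eventually_ge[OF assms])
    then show "\<forall>\<^sub>F y in at x within {y. \<forall>l::real. \<bar>l\<bar> = 1 \<longrightarrow> y \<noteq> l *\<^sub>R x}.
        r \<le> 1 / sqrt A * Psi M xt x y"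
      by (rule eventually_mono) (use \<open>0 < A\<close> in \<open>simp add: mult.commute le_divide_eq\<close>)
  qed
qed

end
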